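(* Let $\ell,m,n$ be positive integers with $\ell<n$, $m<n$, $\gcd(m,n)=1$, let $\mathcal{S}=\mathcal{F}[\ell,m,n]$, and let $k\in\mathbb{Z}^+$ and $\chi\in\mathbb{Z}$ with $|\chi|<k$. Then, as words, $$\mathcal{G}^+[k,\chi]=\begin{cases}\mathcal{S}^{k+\chi}\,\hat{\mathcal{X}}\,\big(\mathcal{S}^{\overline0}\big)^{-\chi}, & \chi=-k+1,\dots,-1,\\ \big(\mathcal{S}^{\overline{\ell d}}\big)^{\chi}\,\mathcal{S}^{k-\chi}\,\hat{\mathcal{X}}, & \chi=0,\dots,k-1,\end{cases}$$ $$\mathcal{G}^-[k,\chi]=\begin{cases}\mathcal{S}\,\big(\mathcal{S}^{\overline0}\big)^{-\chi}\,\hat{\mathcal{Y}}\,\mathcal{S}^{k+\chi-1}, & \chi=-k+1,\dots,0,\\ \mathcal{S}^{\overline{\ell d}}\,\hat{\mathcal{Y}}\,\mathcal{S}^{k-\chi}\,\big(\mathcal{S}^{\overline{\ell d}}\big)^{\chi-1}, & \chi=1,\dots,k-1.\end{cases}$$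
   Context: For positive integers $\ell<n$, $m<n$, $\gcd(m,n)=1$, $\mathcal{F}[\ell,m,n]$ is the $n$-periodic sequence with $\mathcal{F}[\ell,m,n]_i=L$ if $im\bmod n<\ell$ and $R$ otherwise, identified with the word $\mathcal{F}_0\cdots\mathcal{F}_{n-1}$. $d\in\{1,\dots,n-1\}$ is the inverse of $m$ mod $n$. Words over $\{L,R\}$: juxtaposition is concatenation, $\mathcal{W}^p$ is the concatenation of $p$ copies ($\mathcal{W}^0$ empty). $\mathcal{S}^{\overline j}$ is the word (length $n$) differing from $\mathcal{S}$ exactly at index $j\bmod n$. $\hat{\mathcal{X}}=\mathcal{S}_0\cdots\mathcal{S}_{n-d-1}$ and $\hat{\mathcal{Y}}=\mathcal{S}_{n-d}\cdots\mathcal{S}_{n-1}$. The left and right Farey roots of $\frac mn$ are the fractions $\frac{m^-}{n^-}<\frac{m^+}{n^+}$ with $m^\pm\ge0$, $n^\pm\ge1$, $m^-+m^+=m$, $n^-+n^+=n$, $m^+n^--m^-n^+=1$. Put $\ell^+=\lceil\ell n^+/n\rceil$, $\ell^-=\lfloor\ell n^-/n\rfloor$, $\ell_k^\pm=k\ell+\ell^\pm$, $m_k^\pm=km+m^\pm$, $n_k^\pm=kn+n^\pm$, and $\mathcal{G}^\pm[k,\chi]=\mathcal{F}[\ell_k^\pm+\chi,m_k^\pm,n_k^\pm]$, identified with its word of length $n_k^\pm$. *)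

theory Defs
  imports Complex_Main
begin

datatype LR = L | R

fun flipLR :: "LR \<Rightarrow> LR" where
  "flipLR L = R" | "flipLR R = L"

definition Fword :: "int \<Rightarrow> nat \<Rightarrow> nat \<Rightarrow> LR list" where
  "Fword l m n = map (\<lambda>i. if int ((i * m) mod n) < l then L else R) [0..<n]"

definition wpow :: "'a list \<Rightarrow> nat \<Rightarrow> 'a list" where
  "wpow W p = concat (replicate p W)"

text \<open>S with overline j: the word differing from S exactly at index j mod n.\<close>
definition flip_at :: "LR list \<Rightarrow> nat \<Rightarrow> LR list" where
  "flip_at S j = S[j mod length S := flipLR (S ! (j mod length S))]"

end

theory Submission
  imports Defs
begin

(*
  Put N = k n + n\<^sup>\<plusminus> and M = k m + m\<^sup>\<plusminus> for the parameters of G\<^sup>\<plusminus>[k, \<chi>]. The Farey-root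
  relation gives n M - N m = \<plusminus>1, hence n (i M mod N) = N q \<plusminus> i with q \<equiv> i m (mod n), q taken
  in [0, n) resp. (0, n]. So the i-th letter of G\<^sup>\<plusminus> is the letter of S at the residue q, unless
  q is adjacent to l; there the small term \<plusminus>i + \<chi> n decides, and the letters it changes are
  exactly the flipped letters of the blocks S with overline 0 resp. overline l d on the
  right-hand sides.
*)

lemma length_wpow [simp]: "length (wpow W p) = p * length W"
  by (induction p) (auto simp: wpow_def)

lemma length_Fword [simp]: "length (Fword l m n) = n"
  by (simp add: Fword_def)

lemma length_flip_at [simp]: "length (flip_at W j) = length W"
  by (simp add: flip_at_def)

lemma nth_wpow: "i < p * length W \<Longrightarrow> wpow W p ! i = W ! (i mod length W)"
proof (induction p arbitrary: i)
  case (Suc p)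
  have "wpow W (Suc p) = W @ wpow W p" by (simp add: wpow_def)
  with Suc show ?case
    by (auto simp: nth_append le_mod_geq not_less)
qed simp

lemma nth_wpow_append:
  "(wpow W p @ V) ! i = (if i < p * length W then W ! (i mod length W) else V ! (i - p * length W))"
  by (simp add: nth_append nth_wpow)

lemma diff_mult_mod_eq: "a * n \<le> i \<Longrightarrow> (i - a * n) mod n = i mod (n :: nat)"
  by (metis le_add_diff_inverse2 mod_mult_self1)

lemma nth_wpow_wpow_take:
  assumes "length V = length W" "j \<le> length W" "i < (x + r) * length W + j"
  shows "(wpow V x @ wpow W r @ take j W) ! i =
    (if i < x * length W then V ! (i mod length W) else W ! (i mod length W))"
proof (cases "i < (x + r) * length W")
  case True
  then show ?thesis
    using assms(1) diff_mult_mod_eq[of x "length W" i] by (simp add: nth_wpow_append add_mult_distrib)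
next
  case False
  then have "i - (x + r) * length W < j" "(i - (x + r) * length W) mod length W = i mod length W"
    using assms(3) diff_mult_mod_eq[of "x + r" "length W" i] by simp_all
  then show ?thesis
    using False assms(1,2) by (simp add: nth_wpow_append add_mult_distrib diff_diff_left)
qed

lemma nth_wpow_take_wpow:
  assumes "length U = length W" "j \<le> length W" "i < (r + a) * length W + j"
  shows "(wpow W r @ take j W @ wpow U a) ! i =
    (if i < r * length W + j then W ! (i mod length W)
     else U ! ((i - (r * length W + j)) mod length W))"
proof (cases "i < r * length W")
  case False
  then have "i - r * length W < j \<Longrightarrow> (i - r * length W) mod length W = i mod length W"
    "i - r * length W < j \<Longrightarrow> (i - r * length W) mod length W = i - r * length W"
    using diff_mult_mod_eq[of r "length W" i] assms(2) by simp_all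
  then show ?thesis
    using False assms by (auto simp: nth_wpow_append nth_append min_def nth_wpow add_mult_distrib)
qed (simp add: nth_wpow_append)

lemma nth_drop_wpow:
  assumes "j \<le> length W" "t < length W - j + r * length W"
  shows "(drop j W @ wpow W r) ! t = W ! ((t + j) mod length W)"
proof (cases "t < length W - j")
  case True
  then have "t + j < length W"
    by simp
  then show ?thesis
    using True assms(1) by (simp add: nth_append ac_simps)
next
  case False
  have "(t - (length W - j)) mod length W = (t + j) mod length W"
    using False assms(1) le_mod_geq[of "length W" "t + j"] by simp
  then show ?thesis
    using False assms by (simp add: nth_append nth_wpow)
qed

lemma nth_append_wpow_drop_wpow:
  assumes "length U = length W" "j \<le> length W"
    and "i < (a + 1) * length W + (length W - j) + r * length W"
  shows "(W @ wpow U a @ drop j W @ wpow W r) ! i =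
    (if i < length W then W ! i
     else if i < (a + 1) * length W then U ! (i mod length W)
     else W ! ((i + j) mod length W))"
proof (cases "i < length W")
  case False
  define t where "t = i - length W"
  have W: "(W @ wpow U a @ drop j W @ wpow W r) ! i = (wpow U a @ drop j W @ wpow W r) ! t"
    using False unfolding t_def by (simp add: nth_append_right)
  show ?thesis
  proof (cases "i < (a + 1) * length W")
    case True
    then have "t < a * length W" "t mod length W = i mod length W"
      using False unfolding t_def by (simp_all add: le_mod_geq)
    then show ?thesis
      using W True False assms(1) by (simp add: nth_wpow_append)
  next
    case outer: False
    then have "\<not> t < a * length W" and t_bound: "t - a * length W < length W - j + r * length W"
      using assms(3) unfolding t_def by (simp_all add: algebra_simps)
    have "(drop j W @ wpow W r) ! (t - a * length W) = W ! ((t - a * length W + j) mod length W)"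
      by (rule nth_drop_wpow[OF assms(2) t_bound])
    moreover have "(t - a * length W + j) mod length W = (i + j) mod length W"
      using outer diff_mult_mod_eq[of "a + 1" "length W" "i + j"] unfolding t_def
      by (simp add: algebra_simps)
    ultimately show ?thesis
      using W \<open>\<not> t < a * length W\<close> outer False assms(1) by (simp add: nth_wpow_append)
  qed
qed (simp add: nth_append_left)

lemma nth_append_drop_wpow_wpow:
  assumes "length V = length W" "j \<le> length W"
    and "i < length W + (length W - j) + (r + s) * length W"
  shows "(V @ drop j W @ wpow W r @ wpow V s) ! i =
    (if i < length W then V ! i
     else if i < length W + (length W - j) + r * length W then W ! ((i + j) mod length W)
     else V ! ((i + j) mod length W))"
proof (cases "i < length W")
  case False
  define t where "t = i - length W"
  have V: "(V @ drop j W @ wpow W r @ wpow V s) ! i = ((drop j W @ wpow W r) @ wpow V s) ! t"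
    using False assms(1) unfolding t_def by (simp add: nth_append_right)
  have len: "length (drop j W @ wpow W r) = length W - j + r * length W"
    by simp
  show ?thesis
  proof (cases "i < length W + (length W - j) + r * length W")
    case True
    then have t: "t < length W - j + r * length W"
      using False unfolding t_def by simp
    then have "(V @ drop j W @ wpow W r @ wpow V s) ! i = W ! ((t + j) mod length W)"
      using V len assms(2) by (simp only: nth_append_left nth_drop_wpow)
    moreover have "(t + j) mod length W = (i + j) mod length W"
      using False unfolding t_def by (simp add: le_mod_geq)
    ultimately show ?thesis
      using True False by simp
  next
    case outer: False
    define u where "u = t - (length W - j + r * length W)"
    have "i + j = u + (r + 2) * length W"
      using outer assms(2) unfolding u_def t_def by (simp add: algebra_simps)
    then have "u mod length W = (i + j) mod length W"
      by (metis mod_mult_self1)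
    moreover have "u < s * length W"
      using outer assms(3) unfolding u_def t_def by (simp add: algebra_simps)
    moreover have "(V @ drop j W @ wpow W r @ wpow V s) ! i = wpow V s ! u"
      using V len outer unfolding u_def t_def by (simp only: nth_append_right)
    ultimately show ?thesis
      using outer False assms(1) by (simp add: nth_wpow)
  qed
qed (use assms(1) in \<open>simp add: nth_append_left\<close>)

lemma mod_eq_less_iff:
  fixes x r a n :: int
  assumes "x mod n = r" "0 < n"
  shows "x < r + a * n \<longleftrightarrow> x < a * n"
proof -
  define q where "q = x div n"
  have x: "x = q * n + r" "0 \<le> r" "r < n"
    using assms unfolding q_def by (auto simp: div_mult_mod_eq)
  show ?thesis
  proof (cases "q < a")
    case True
    then have "(q + 1) * n \<le> a * n" using assms(2) by (intro mult_right_mono) auto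
    then show ?thesis using x True assms(2) by (simp add: algebra_simps)
  next
    case False
    then have "a * n \<le> q * n" using assms(2) by (intro mult_right_mono) auto
    then show ?thesis using x by linarith
  qed
qed

lemma mod_eq_greater_iff:
  fixes x r a n :: int
  assumes "x mod n = r" "0 < n"
  shows "r + a * n < x \<longleftrightarrow> (a + 1) * n \<le> x"
proof -
  define q where "q = x div n"
  have x: "x = q * n + r" "0 \<le> r" "r < n"
    using assms unfolding q_def by (auto simp: div_mult_mod_eq)
  show ?thesis
  proof (cases "a < q")
    case True
    then have "(a + 1) * n \<le> q * n" using assms(2) by (intro mult_right_mono) auto
    then show ?thesis using x True assms(2) by (simp add: algebra_simps)
  next
    case False
    then have "q * n \<le> a * n" using assms(2) by (intro mult_right_mono) auto
    moreover have "(a + 1) * n = a * n + n"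
      by (simp add: algebra_simps)
    ultimately show ?thesis using x False by linarith
  qed
qed

lemma mult_less_cases:
  fixes N u v :: int
  assumes "0 < N" "- 2 * N < v" "v < 2 * N"
  shows "N * u < v \<longleftrightarrow> u \<le> -2 \<or> (u = -1 \<and> - N < v) \<or> (u = 0 \<and> 0 < v) \<or> (u = 1 \<and> N < v)"
proof -
  consider "u \<le> -2" | "u = -1" | "u = 0" | "u = 1" | "2 \<le> u" by linarith
  then show ?thesis
  proof cases
    case 1
    then have "N * u \<le> N * -2" using assms(1) by (intro mult_left_mono) auto
    then show ?thesis using 1 assms by linarith
  next
    case 5
    then have "N * 2 \<le> N * u" using assms(1) by (intro mult_left_mono) auto
    then show ?thesis using 5 assms by linarith
  qed auto
qed

lemma mult_add_bounds:
  fixes N q s a b :: int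
  assumes "0 \<le> s" "s < N" "N * a \<le> N * q + s" "N * q + s < N * b"
  shows "a \<le> q" "q < b"
proof -
  have "N * a < N * (q + 1)"
    using assms by (simp add: algebra_simps)
  moreover have "N * q < N * b"
    using assms by linarith
  moreover have "0 < N"
    using assms by linarith
  ultimately show "a \<le> q" "q < b"
    by (simp_all add: mult_less_cancel_left)
qed

lemma mult_bounds_of_abs_less:
  fixes \<chi> :: int and k n :: nat
  assumes "\<bar>\<chi>\<bar> < int k"
  shows "\<chi> * int n \<le> int k * int n - int n" "int n - int k * int n \<le> \<chi> * int n"
proof -
  have "\<chi> * int n \<le> (int k - 1) * int n" "(1 - int k) * int n \<le> \<chi> * int n"
    using assms by (intro mult_right_mono; simp)+
  then show "\<chi> * int n \<le> int k * int n - int n" "int n - int k * int n \<le> \<chi> * int n"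
    by (simp_all add: algebra_simps)
qed

lemma mult_mod_rescale:
  fixes n M N m e i :: int
  assumes "n * M = N * m + e"
  shows "n * (i * M mod N) = N * (i * m - n * (i * M div N)) + e * i"
proof -
  have "n * (i * M mod N) = i * (n * M) - N * (n * (i * M div N))"
    by (simp add: minus_div_mult_eq_mod [symmetric] algebra_simps)
  also have "\<dots> = i * (N * m + e) - N * (n * (i * M div N))"
    using assms by simp
  finally show ?thesis by (simp add: algebra_simps)
qed

lemma nth_Fword_rescaled:
  fixes lam e :: int and M N m n i :: nat
  assumes "int n * int M = int N * int m + e" "i < N" "0 < n"
  shows "Fword lam M N ! i =
    (if int N * (int i * int m - int n * (int i * int M div int N)) + e * int i < int n * lam
     then L else R)"
proof -
  have "int (i * M mod N) < lam \<longleftrightarrow> int n * (int i * int M mod int N) < int n * lam"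
    using assms(3) by (simp add: zmod_int)
  then show ?thesis
    using assms(2) mult_mod_rescale[OF assms(1), of "int i"] by (simp add: Fword_def)
qed

text \<open>\<open>nm, np, mm, mp\<close> stand for the Farey-root data \<open>n\<^sup>-, n\<^sup>+, m\<^sup>-, m\<^sup>+\<close>.\<close>

locale farey_roots =
  fixes l m n mm mp nm np :: nat
  assumes l_pos: "0 < l" and l_less: "l < n"
    and nm_pos: "1 \<le> nm" and np_pos: "1 \<le> np"
    and m_split: "mm + mp = m" and n_split: "nm + np = n"
    and det: "int mp * int nm - int mm * int np = 1"
begin

lemma n_pos: "0 < n"
  using l_pos l_less by linarith

lemma nm_times_m: "int nm * int m = int mm * int n + 1"
  using det m_split n_split by (auto simp: algebra_simps)

lemma np_times_m: "int np * int m = int mp * int n - 1"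
  using det m_split n_split by (auto simp: algebra_simps)

definition res :: "int \<Rightarrow> int" where
  "res x = x * int m mod int n"

text \<open>Since \<open>nm\<close> is the inverse \<open>d\<close> of \<open>m\<close> (\<open>inverse_eq_nm\<close>), \<open>c\<close> is the index \<open>l d mod n\<close>,
  the only index with residue \<open>l\<close>.\<close>

definition c :: nat where
  "c = l * nm mod n"

definition lm :: nat where
  "lm = l * nm div n"

lemma l_times_nm: "int l * int nm = int lm * int n + int c"
  unfolding lm_def c_def by (metis of_nat_add of_nat_mult div_mult_mod_eq mult.commute)

lemma n_split_int: "int nm + int np = int n"
  by (simp flip: n_split)

lemma n_times_l: "int n * int l = int lm * int n + int c + int np * int l"
proof -
  have "int n = int nm + int np"
    using n_split by simp
  then have "int n * int l = int l * int nm + int np * int l"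
    by (simp add: algebra_simps)
  then show ?thesis
    using l_times_nm by simp
qed

lemma res_bounds: "0 \<le> res x" "res x < int n"
  using n_pos by (simp_all add: res_def)

lemma res_mod [simp]: "res (x mod int n) = res x"
  by (simp add: res_def mod_mult_left_eq)

lemma res_add_mult [simp]: "res (x + y * int n) = res x"
proof -
  have "(x + y * int n) * int m = x * int m + (y * int m) * int n"
    by (simp add: algebra_simps)
  then show ?thesis by (simp add: res_def)
qed

lemma res_eq_iff: "res x = res y \<longleftrightarrow> x mod int n = y mod int n"
proof
  have inv: "z mod int n = res z * int nm mod int n" for z
  proof -
    have "z * int m * int nm = z * (int nm * int m)"
      by (simp add: ac_simps)
    also have "\<dots> = z + (z * int mm) * int n"
      using nm_times_m by (simp add: algebra_simps)
    finally have "z * int m * int nm mod int n = z mod int n"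
      by simp
    then show ?thesis
      by (simp add: res_def mod_mult_left_eq)
  qed
  show "res x = res y \<Longrightarrow> x mod int n = y mod int n"
    using inv[of x] inv[of y] by simp
qed (metis res_mod)

lemma res_add_nm: "res (x + int nm) = (res x + 1) mod int n"
proof -
  have "(x + int nm) * int m = (x * int m + 1) + int mm * int n"
    using nm_times_m by (simp add: algebra_simps)
  then show ?thesis
    by (simp add: res_def mod_add_left_eq)
qed

lemma res_add_np: "res (x + int np) = (res x - 1) mod int n"
proof -
  have "(x + int np) * int m = (x * int m - 1) + int mp * int n"
    using np_times_m by (simp add: algebra_simps)
  then show ?thesis
    by (simp add: res_def mod_diff_left_eq)
qed

lemma res_eq_l_iff: "res x = int l \<longleftrightarrow> x mod int n = int c"
proof -
  have "res (int c) = int l"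
  proof -
    have "res (int c) = res (int l * int nm)"
      by (metis c_def of_nat_mult res_mod zmod_int)
    also have "\<dots> = int l * (int nm * int m) mod int n"
      by (simp add: res_def mult.assoc)
    also have "\<dots> = (int l + (int l * int mm) * int n) mod int n"
      using nm_times_m by (simp add: algebra_simps)
    also have "\<dots> = int l"
      using l_less by simp
    finally show ?thesis .
  qed
  moreover have "int c mod int n = int c"
    using n_pos by (simp add: c_def zmod_int)
  ultimately show ?thesis
    using res_eq_iff[of x "int c"] by simp
qed

lemma res_eq_0_iff: "res x = 0 \<longleftrightarrow> x mod int n = 0"
  using res_eq_iff[of x 0] by (simp add: res_def)

abbreviation S :: "LR list" where
  "S \<equiv> Fword (int l) m n"

abbreviation S0 :: "LR list" where
  "S0 \<equiv> flip_at S 0"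

abbreviation Sld :: "LR list" where
  "Sld \<equiv> flip_at S (l * nm)"

lemma nth_S: "S ! (t mod n) = (if res (int t) < int l then L else R)"
proof -
  have "int (t mod n * m mod n) = res (int t)"
    by (metis res_def res_mod of_nat_mult zmod_int)
  then show ?thesis
    using n_pos by (simp add: Fword_def)
qed

lemma nth_S0: "S0 ! (t mod n) = (if 0 < res (int t) \<and> res (int t) < int l then L else R)"
proof -
  have "S ! 0 = L"
    using nth_S[of 0] l_pos by (simp add: res_def)
  moreover have "res (int t) = 0 \<longleftrightarrow> t mod n = 0"
    by (simp add: res_eq_0_iff flip: zmod_int)
  ultimately show ?thesis
    using nth_S[of t] res_bounds[of "int t"] n_pos
    by (auto simp: flip_at_def nth_list_update)
qed

lemma nth_Sld: "Sld ! (t mod n) = (if res (int t) \<le> int l then L else R)"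
proof -
  have "S ! c = R"
    using nth_S[of c] res_eq_l_iff[of "int c"] n_pos by (simp add: c_def zmod_int)
  moreover have "res (int t) = int l \<longleftrightarrow> t mod n = c"
    by (simp add: res_eq_l_iff c_def flip: zmod_int)
  ultimately show ?thesis
    using nth_S[of t] n_pos by (auto simp: flip_at_def nth_list_update c_def)
qed

text \<open>The words \<open>G\<^sup>+[k,\<chi>]\<close> and \<open>G\<^sup>-[k,\<chi>]\<close>, with \<open>l\<^sup>+ = l - lm\<close> and \<open>l\<^sup>- = lm\<close>.\<close>

abbreviation Gp :: "nat \<Rightarrow> int \<Rightarrow> LR list" where
  "Gp k \<chi> \<equiv> Fword (int (k * l) + (int l - int lm) + \<chi>) (k * m + mp) (k * n + np)"

abbreviation Gm :: "nat \<Rightarrow> int \<Rightarrow> LR list" where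
  "Gm k \<chi> \<equiv> Fword (int (k * l) + int lm + \<chi>) (k * m + mm) (k * n + nm)"

lemma nth_Gp_scaled:
  assumes "i < k * n + np"
  shows "Gp k \<chi> ! i =
    (if int (k * n + np) * (res (int i) - int l) < int c + \<chi> * int n - int i then L else R)"
proof -
  define N M where "N = k * n + np" and "M = k * m + mp"
  define q where "q = int i * int m - int n * (int i * int M div int N)"
  have rel: "int n * int M = int N * int m + 1"
    using np_times_m unfolding N_def M_def by (simp add: algebra_simps)
  have iN: "int i < int N"
    using assms unfolding N_def of_nat_less_iff .
  define v where "v = int i * int M mod int N"
  have "int N * 0 \<le> int N * q + int i" "int N * q + int i < int N * int n"
  proof -
    have "0 \<le> int n * v" "int n * v < int n * int N"
      using iN n_pos unfolding v_def by simp_all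
    moreover have "int n * v = int N * q + int i"
      using mult_mod_rescale[OF rel, of "int i"] unfolding v_def q_def by simp
    ultimately show "int N * 0 \<le> int N * q + int i" "int N * q + int i < int N * int n"
      by (simp_all add: mult.commute)
  qed
  then have "0 \<le> q" "q < int n"
    using mult_add_bounds[of "int i" "int N" 0 q "int n"] iN by simp_all
  moreover have "int i * int m = q + (int i * int M div int N) * int n"
    unfolding q_def by (simp add: algebra_simps)
  ultimately have "q = res (int i)"
    unfolding res_def by (metis mod_mult_self1 mod_pos_pos_trivial)
  moreover have "int n * (int (k * l) + (int l - int lm) + \<chi>) = int N * int l + int c + \<chi> * int n"
    using n_times_l unfolding N_def by (simp add: algebra_simps)
  ultimately show ?thesis
    using nth_Fword_rescaled[OF rel assms[folded N_def] n_pos]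
    unfolding N_def M_def q_def by (simp add: algebra_simps)
qed

text \<open>Here \<open>res (i + np) + 1\<close> is the representative of \<open>i m mod n\<close> in \<open>1..n\<close>.\<close>

lemma nth_Gm_scaled:
  assumes "0 < i" "i < k * n + nm"
  shows "Gm k \<chi> ! i =
    (if int (k * n + nm) * (res (int i + int np) + 1 - int l) < int i - int c + \<chi> * int n
     then L else R)"
proof -
  define N M where "N = k * n + nm" and "M = k * m + mm"
  define q where "q = int i * int m - int n * (int i * int M div int N)"
  have rel: "int n * int M = int N * int m + - 1"
    using nm_times_m unfolding N_def M_def by (simp add: algebra_simps)
  have iN: "int i < int N"
    using assms(2) unfolding N_def of_nat_less_iff .
  define v where "v = int i * int M mod int N"
  have "int N * 0 \<le> int N * (q - 1) + (int N - int i)"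
    "int N * (q - 1) + (int N - int i) < int N * int n"
  proof -
    have "0 \<le> int n * v" "int n * v < int n * int N"
      using iN n_pos unfolding v_def by simp_all
    moreover have "int n * v = int N * q - int i"
      using mult_mod_rescale[OF rel, of "int i"] unfolding v_def q_def by simp
    ultimately show "int N * 0 \<le> int N * (q - 1) + (int N - int i)"
      "int N * (q - 1) + (int N - int i) < int N * int n"
      by (simp_all add: algebra_simps)
  qed
  then have "0 \<le> q - 1" "q - 1 < int n"
    using mult_add_bounds[of "int N - int i" "int N" 0 "q - 1" "int n"] iN assms(1) by simp_all
  moreover have "int i * int m - 1 = (q - 1) + (int i * int M div int N) * int n"
    unfolding q_def by (simp add: algebra_simps)
  moreover have "res (int i + int np) = (int i * int m - 1) mod int n"
  proof -
    have "res (int i + int np) = (res (int i) - 1) mod int n"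
      by (rule res_add_np)
    then show ?thesis
      by (simp add: res_def mod_diff_left_eq)
  qed
  ultimately have "q = res (int i + int np) + 1"
    by (metis mod_mult_self1 mod_pos_pos_trivial diff_add_cancel)
  moreover have "int n * (int (k * l) + int lm + \<chi>) = int N * int l - int c + \<chi> * int n"
    using l_times_nm unfolding N_def by (simp add: algebra_simps)
  ultimately show ?thesis
    using nth_Fword_rescaled[OF rel assms(2)[folded N_def] n_pos]
    unfolding N_def M_def q_def by (simp add: algebra_simps)
qed

lemma nth_Gm_0:
  assumes "0 < k" "- int k < \<chi>"
  shows "Gm k \<chi> ! 0 = L"
proof -
  have "k \<le> k * l"
    using l_pos by simp
  then have "int k \<le> int (k * l)"
    by (simp only: of_nat_le_iff)
  then have "0 < int (k * l) + int lm + \<chi>"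
    using assms(2) by linarith
  moreover have "0 < k * n + nm"
    using nm_pos by simp
  ultimately show ?thesis
    by (simp add: Fword_def)
qed

lemma c_less_n: "c < n"
  using n_pos by (simp add: c_def)

lemma less_c_add_iff: "res x = int l \<Longrightarrow> x < int c + a * int n \<longleftrightarrow> x < a * int n"
  using mod_eq_less_iff[of x "int n" "int c" a] n_pos by (simp add: res_eq_l_iff)

lemma c_add_less_iff: "res x = int l \<Longrightarrow> int c + a * int n < x \<longleftrightarrow> (a + 1) * int n \<le> x"
  using mod_eq_greater_iff[of x "int n" "int c" a] n_pos by (simp add: res_eq_l_iff)

lemma nth_Gp:
  assumes "\<bar>\<chi>\<bar> < int k" "i < k * n + np"
  shows "Gp k \<chi> ! i =
    (if res (int i) + 1 < int l
        \<or> (res (int i) + 1 = int l \<and> int i < int (k * n + np) + int c + \<chi> * int n)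
        \<or> (res (int i) = int l \<and> int i < int c + \<chi> * int n)
     then L else R)"
proof -
  define N where "N = int (k * n + np)"
  have "N = int k * int n + int np" "1 \<le> int np"
    using np_pos unfolding N_def by simp_all
  moreover have "int i < N"
    using assms(2) unfolding N_def of_nat_less_iff .
  moreover have "\<chi> * int n \<le> int k * int n - int n" "int n - int k * int n \<le> \<chi> * int n"
    using mult_bounds_of_abs_less[OF assms(1)] by simp_all
  moreover have "int c < int n" "0 \<le> int c"
    using c_less_n by simp_all
  ultimately have "0 < N" "- 2 * N < int c + \<chi> * int n - int i" "int c + \<chi> * int n - int i < N"
    by linarith+
  then show ?thesis
    using nth_Gp_scaled[OF assms(2), of \<chi>, folded N_def]
      mult_less_cases[of N "int c + \<chi> * int n - int i" "res (int i) - int l"]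
    unfolding N_def[symmetric] by auto
qed

lemma nth_Gm:
  assumes "\<bar>\<chi>\<bar> < int k" "0 < i" "i < k * n + nm"
  shows "Gm k \<chi> ! i =
    (if res (int i + int np) + 1 < int l
        \<or> (res (int i + int np) + 1 = int l \<and> int c - \<chi> * int n < int i)
        \<or> (res (int i + int np) = int l \<and> int (k * n + nm) + int c - \<chi> * int n < int i)
     then L else R)"
proof -
  define N where "N = int (k * n + nm)"
  have "N = int k * int n + int nm" "0 < int i" "0 \<le> int nm"
    using assms(2) unfolding N_def by simp_all
  moreover have "int i < N"
    using assms(3) unfolding N_def of_nat_less_iff .
  moreover have "\<chi> * int n \<le> int k * int n - int n" "int n - int k * int n \<le> \<chi> * int n"
    using mult_bounds_of_abs_less[OF assms(1)] by simp_all
  moreover have "int c < int n" "0 \<le> int c"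
    using c_less_n by simp_all
  ultimately have "0 < N" "- N < int i - int c + \<chi> * int n" "int i - int c + \<chi> * int n < 2 * N"
    by linarith+
  then show ?thesis
    using nth_Gm_scaled[OF assms(2,3), of \<chi>, folded N_def]
      mult_less_cases[of N "int i - int c + \<chi> * int n" "res (int i + int np) + 1 - int l"]
    unfolding N_def[symmetric] by auto
qed

lemma res_add_np_succ: "(res (x + int np) + 1) mod int n = res x"
proof -
  have "res x = res ((x + int np) + int nm)"
    using res_add_mult[of x 1] n_split_int by (simp add: algebra_simps)
  then show ?thesis
    by (simp add: res_add_nm)
qed

lemma res_succ_cases:
  assumes "res x = (p + 1) mod int n" "0 \<le> p" "p < int n"
  shows "(p + 1 < int n \<and> res x = p + 1) \<or> (p + 1 = int n \<and> res x = 0)"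
proof (cases "p + 1 < int n")
  case False
  then have "p + 1 = int n"
    using assms(3) by simp
  then show ?thesis
    using assms(1) by simp
qed (use assms in simp)

lemma nth_S0_succ:
  assumes "res (int t) = (p + 1) mod int n" "0 \<le> p" "p < int n"
  shows "S0 ! (t mod n) = (if p + 1 < int l then L else R)"
  using res_succ_cases[OF assms] nth_S0[of t] l_less assms(2) by auto

lemma Gp_nonneg:
  assumes "0 \<le> \<chi>" "\<chi> < int k"
  shows "Gp k \<chi> = wpow Sld (nat \<chi>) @ wpow S (nat (int k - \<chi>)) @ take np S"
proof -
  define x where "x = nat \<chi>"
  have x: "\<chi> = int x" "x + (k - x) = k" "nat (int k - \<chi>) = k - x"
    using assms unfolding x_def by auto
  have np_le: "np \<le> n"
    using n_split by simp
  show ?thesis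
    unfolding x(3) x_def[symmetric]
  proof (rule nth_equalityI)
    show "length (Gp k \<chi>) = length (wpow Sld x @ wpow S (k - x) @ take np S)"
      using x(2) np_le by (simp flip: add_mult_distrib)
    fix i assume "i < length (Gp k \<chi>)"
    then have i: "i < k * n + np"
      by simp
    define p where "p = res (int i)"
    have "int i < int (k * n + np)"
      using i by (simp only: of_nat_less_iff)
    moreover have "0 \<le> \<chi> * int n" "0 \<le> int c"
      using assms(1) by simp_all
    ultimately have "int i < int (k * n + np) + int c + \<chi> * int n"
      by linarith
    moreover have "p = int l \<Longrightarrow> int i < int c + \<chi> * int n \<longleftrightarrow> i < x * n"
      using less_c_add_iff[of "int i" \<chi>] x(1) unfolding p_def by (simp flip: of_nat_mult)
    ultimately have G: "Gp k \<chi> ! i = (if p < int l \<or> (p = int l \<and> i < x * n) then L else R)"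
      using nth_Gp[of \<chi> k i] assms i unfolding p_def[symmetric] by auto
    have "(wpow Sld x @ wpow S (k - x) @ take np S) ! i =
        (if i < x * n then Sld ! (i mod n) else S ! (i mod n))"
      using nth_wpow_wpow_take[of Sld S np i x "k - x"] np_le i x(2) by simp
    then show "Gp k \<chi> ! i = (wpow Sld x @ wpow S (k - x) @ take np S) ! i"
      using G nth_S[of i] nth_Sld[of i] unfolding p_def by auto
  qed
qed

lemma nth_rhs_Gp_neg:
  assumes "i < (r + a) * n + np"
  shows "(wpow S r @ take np S @ wpow S0 a) ! i =
    (if res (int i) + 1 < int l \<or> (res (int i) + 1 = int l \<and> i < r * n + np + c) then L else R)"
proof -
  define A where "A = r * n + np"
  define p where "p = res (int i)"
  have p: "0 \<le> p" "p < int n"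
    using res_bounds unfolding p_def by auto
  have "np \<le> n"
    using n_split by simp
  then have W: "(wpow S r @ take np S @ wpow S0 a) ! i =
      (if i < A then S ! (i mod n) else S0 ! ((i - A) mod n))"
    using nth_wpow_take_wpow[of S0 S np i r a] assms unfolding A_def by simp
  show ?thesis
  proof (cases "i < A")
    case True
    then show ?thesis
      using W nth_S[of i] A_def unfolding p_def by auto
  next
    case False
    define t where "t = i - A"
    have "int A + int nm = (int r + 1) * int n"
      using n_split_int unfolding A_def of_nat_add of_nat_mult by (simp add: algebra_simps)
    then have "int t = (int i + int nm) + (- int r - 1) * int n"
      using False unfolding t_def by (simp add: of_nat_diff algebra_simps)
    then have res_t: "res (int t) = (p + 1) mod int n"
      unfolding p_def by (simp add: res_add_nm)
    have "\<not> t < c" if "p + 1 = int l"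
      using res_succ_cases[OF res_t p] less_c_add_iff[of "int t" 0] that l_less by auto
    then show ?thesis
      using W nth_S0_succ[OF res_t p] False A_def unfolding t_def p_def by auto
  qed
qed

lemma Gp_neg:
  assumes "\<chi> < 0" "- \<chi> < int k"
  shows "Gp k \<chi> = wpow S (nat (int k + \<chi>)) @ take np S @ wpow S0 (nat (- \<chi>))"
proof -
  define a where "a = nat (- \<chi>)"
  have a: "\<chi> = - int a" "(k - a) + a = k" "nat (int k + \<chi>) = k - a"
    using assms unfolding a_def by auto
  define A where "A = (k - a) * n + np"
  have A: "A + a * n = k * n + np"
    using a(2) unfolding A_def by (simp flip: add_mult_distrib)
  show ?thesis
    unfolding a(3) a_def[symmetric]
  proof (rule nth_equalityI)
    have "np \<le> n"
      using n_split by simp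
    then show "length (Gp k \<chi>) = length (wpow S (k - a) @ take np S @ wpow S0 a)"
      using A unfolding A_def by simp
    fix i assume "i < length (Gp k \<chi>)"
    then have i: "i < k * n + np"
      by simp
    have "\<chi> * int n \<le> - 1 * int n"
      using assms(1) by (intro mult_right_mono) auto
    then have "\<not> int i < int c + \<chi> * int n"
      using c_less_n by simp
    moreover have "int A = int (k * n + np) + \<chi> * int n"
      using A a(1) by (simp flip: of_nat_mult of_nat_add)
    moreover have "i < (k - a + a) * n + np"
      using i a(2) by simp
    ultimately show "Gp k \<chi> ! i = (wpow S (k - a) @ take np S @ wpow S0 a) ! i"
      using nth_Gp[of \<chi> k i] nth_rhs_Gp_neg[of i "k - a" a, folded A_def] assms i by auto
  qed
qed

lemma nth_rhs_Gm_nonpos: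
  assumes "0 < i" "i < (a + 1) * n + nm + r * n"
  shows "(S @ wpow S0 a @ drop np S @ wpow S r) ! i =
    (if res (int i + int np) + 1 < int l
        \<or> (res (int i + int np) + 1 = int l \<and> (a + 1) * n \<le> i)
     then L else R)"
proof -
  define p where "p = res (int i + int np)"
  have p: "0 \<le> p" "p < int n"
    using res_bounds unfolding p_def by auto
  have res_i: "res (int i) = (p + 1) mod int n"
    using res_add_np_succ[of "int i"] unfolding p_def by simp
  have "n - np = nm" "np \<le> n"
    using n_split by simp_all
  then have W: "(S @ wpow S0 a @ drop np S @ wpow S r) ! i =
      (if i < n then S ! i else if i < (a + 1) * n then S0 ! (i mod n)
       else S ! ((i + np) mod n))"
    using nth_append_wpow_drop_wpow[of S0 S np i a r] assms(2) by simp
  show ?thesis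
  proof (cases "i < n")
    case True
    then have "res (int i) \<noteq> 0"
      using assms(1) res_eq_0_iff[of "int i"] by (simp flip: zmod_int)
    then have "res (int i) = p + 1"
      using res_succ_cases[OF res_i p] by auto
    moreover have "\<not> (a + 1) * n \<le> i"
      using True by (simp add: not_le less_le_trans)
    ultimately show ?thesis
      using W True nth_S[of i] unfolding p_def by auto
  next
    case False
    have "res (int (i + np)) = p"
      unfolding p_def by simp
    then show ?thesis
      using W False nth_S0_succ[OF res_i p] nth_S[of "i + np"] unfolding p_def by auto
  qed
qed

lemma nth_rhs_Gm_pos:
  assumes "0 < i" "i < n + nm + (r + s) * n"
  shows "(Sld @ drop np S @ wpow S r @ wpow Sld s) ! i =
    (if res (int i + int np) < int l
        \<or> (res (int i + int np) = int l \<and> n + nm + r * n \<le> i)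
     then L else R)"
proof -
  define p where "p = res (int i + int np)"
  have p: "0 \<le> p" "p < int n"
    using res_bounds unfolding p_def by auto
  have "n - np = nm" "np \<le> n"
    using n_split by simp_all
  then have W: "(Sld @ drop np S @ wpow S r @ wpow Sld s) ! i =
      (if i < n then Sld ! i else if i < n + nm + r * n then S ! ((i + np) mod n)
       else Sld ! ((i + np) mod n))"
    using nth_append_drop_wpow_wpow[of Sld S np i r s] assms(2) by simp
  show ?thesis
  proof (cases "i < n")
    case True
    have res_i: "res (int i) = (p + 1) mod int n"
      using res_add_np_succ[of "int i"] unfolding p_def by simp
    have "res (int i) \<noteq> 0"
      using True assms(1) res_eq_0_iff[of "int i"] by (simp flip: zmod_int)
    then have "res (int i) = p + 1"
      using res_succ_cases[OF res_i p] by auto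
    then show ?thesis
      using W True nth_Sld[of i] unfolding p_def by auto
  next
    case False
    have "res (int (i + np)) = p"
      unfolding p_def by simp
    then show ?thesis
      using W False nth_S[of "i + np"] nth_Sld[of "i + np"] unfolding p_def by auto
  qed
qed

lemma Gm_nonpos:
  assumes "\<chi> \<le> 0" "- \<chi> < int k"
  shows "Gm k \<chi> = S @ wpow S0 (nat (- \<chi>)) @ drop np S @ wpow S (nat (int k + \<chi> - 1))"
proof -
  define a where "a = nat (- \<chi>)"
  have a: "\<chi> = - int a" "(a + 1) + (k - a - 1) = k" "nat (int k + \<chi> - 1) = k - a - 1"
    using assms unfolding a_def by auto
  have len_eq: "(a + 1) * n + (k - a - 1) * n = k * n"
    by (metis a(2) add_mult_distrib)
  then have len: "i < k * n + nm \<longleftrightarrow> i < (a + 1) * n + nm + (k - a - 1) * n" for i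
    by linarith
  show ?thesis
    unfolding a(3) a_def[symmetric]
  proof (rule nth_equalityI)
    have "n - np = nm"
      using n_split by simp
    then show "length (Gm k \<chi>) = length (S @ wpow S0 a @ drop np S @ wpow S (k - a - 1))"
      using len_eq by simp
    fix i assume "i < length (Gm k \<chi>)"
    then have i: "i < k * n + nm"
      by simp
    show "Gm k \<chi> ! i = (S @ wpow S0 a @ drop np S @ wpow S (k - a - 1)) ! i"
    proof (cases "i = 0")
      case True
      then show ?thesis
        using nth_Gm_0[of k \<chi>] assms nth_S[of 0] l_pos n_pos by (simp add: nth_append res_def)
    next
      case False
      define p where "p = res (int i + int np)"
      have c_iff: "int c - \<chi> * int n < int i \<longleftrightarrow> (a + 1) * n \<le> i" if "p + 1 = int l"
      proof -
        have "res (int i) = int l"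
          using res_add_np_succ[of "int i"] that l_less unfolding p_def by simp
        then have "int c + int a * int n < int i \<longleftrightarrow> (int a + 1) * int n \<le> int i"
          by (rule c_add_less_iff)
        also have "\<dots> \<longleftrightarrow> int ((a + 1) * n) \<le> int i"
          by (simp add: algebra_simps)
        also have "\<dots> \<longleftrightarrow> (a + 1) * n \<le> i"
          by (rule of_nat_le_iff)
        finally show ?thesis
          using a(1) by simp
      qed
      have "int i < int (k * n + nm)"
        using i by (simp only: of_nat_less_iff)
      moreover have "0 \<le> int c" "\<chi> * int n \<le> 0"
        using assms(1) by (simp_all add: mult_le_0_iff)
      ultimately have "\<not> int (k * n + nm) + int c - \<chi> * int n < int i"
        by linarith
      then show ?thesis
        using nth_Gm[of \<chi> k i] nth_rhs_Gm_nonpos[of i a "k - a - 1"] c_iff assms False i len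
        unfolding p_def[symmetric] by auto
    qed
  qed
qed

lemma Gm_pos:
  assumes "0 < \<chi>" "\<chi> < int k"
  shows "Gm k \<chi> = Sld @ drop np S @ wpow S (nat (int k - \<chi>)) @ wpow Sld (nat (\<chi> - 1))"
proof -
  define x where "x = nat \<chi>"
  have x: "\<chi> = int x" "1 + (k - x) + (x - 1) = k" "nat (int k - \<chi>) = k - x" "nat (\<chi> - 1) = x - 1"
    using assms unfolding x_def by auto
  define D where "D = n + nm + (k - x) * n"
  have len_eq: "n + (k - x) * n + (x - 1) * n = k * n"
    by (metis x(2) add_mult_distrib mult_1)
  have n_eq: "n - np = nm"
    using n_split by simp
  show ?thesis
    unfolding x(3,4) x_def[symmetric]
  proof (rule nth_equalityI)
    show "length (Gm k \<chi>) = length (Sld @ drop np S @ wpow S (k - x) @ wpow Sld (x - 1))"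
      using len_eq n_eq by simp
    fix i assume "i < length (Gm k \<chi>)"
    then have i: "i < k * n + nm"
      by simp
    show "Gm k \<chi> ! i = (Sld @ drop np S @ wpow S (k - x) @ wpow Sld (x - 1)) ! i"
    proof (cases "i = 0")
      case True
      then show ?thesis
        using nth_Gm_0[of k \<chi>] assms nth_Sld[of 0] n_pos by (simp add: nth_append res_def)
    next
      case False
      define p where "p = res (int i + int np)"
      have c_iff: "int (k * n + nm) + int c - \<chi> * int n < int i \<longleftrightarrow> D \<le> i" if "p = int l"
      proof -
        have "int c + (int k + 1 - int x) * int n < int i + int np \<longleftrightarrow>
            (int k + 1 - int x + 1) * int n \<le> int i + int np"
          using c_add_less_iff[of "int i + int np" "int k + 1 - int x"] that unfolding p_def by simp
        moreover have "int D = int n + int nm + (int k - int x) * int n"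
          using x(2) unfolding D_def by (simp add: of_nat_diff)
        ultimately show ?thesis
          using x(1) n_split_int
          by (simp add: algebra_simps) (smt (verit) of_nat_le_iff[of D i])
      qed
      have "int n \<le> \<chi> * int n"
        using mult_right_mono[of 1 \<chi> "int n"] assms(1) by simp
      moreover have "int c < int n"
        using c_less_n by simp
      ultimately have "int c - \<chi> * int n < int i"
        by linarith
      moreover have "i < n + nm + ((k - x) + (x - 1)) * n"
        using i len_eq by (simp add: add_mult_distrib)
      ultimately show ?thesis
        using nth_Gm[of \<chi> k i] nth_rhs_Gm_pos[of i "k - x" "x - 1"] c_iff assms False i
        unfolding p_def[symmetric] D_def by auto
    qed
  qed
qed

lemma inverse_eq_nm:
  assumes "d < n" "m * d mod n = 1"
  shows "d = nm"
proof -
  have "res (int d) = 1"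
    using assms(2) unfolding res_def by (metis mult.commute of_nat_1 of_nat_mult zmod_int)
  moreover have "res (int nm) = 1"
    using nm_times_m l_pos l_less unfolding res_def by simp
  ultimately have "int d mod int n = int nm mod int n"
    using res_eq_iff[of "int d" "int nm"] by simp
  moreover have "nm < n"
    using n_split np_pos by linarith
  ultimately show ?thesis
    using assms(1) by (simp flip: zmod_int)
qed

lemma floor_l_nm: "\<lfloor>real (l * nm) / real n\<rfloor> = int lm"
  unfolding lm_def by (metis floor_divide_of_nat_eq of_nat_mult)

lemma ceiling_l_np: "\<lceil>real (l * np) / real n\<rceil> = int l - int lm"
proof -
  have "real (l * np) / real n = real l - real (l * nm) / real n"
    using n_split n_pos by (simp add: field_simps flip: of_nat_add distrib_left)
  then have "\<lceil>real (l * np) / real n\<rceil> = - \<lfloor>real (l * nm) / real n - real l\<rfloor>"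
    by (metis ceiling_minus minus_diff_eq)
  also have "\<dots> = int l - \<lfloor>real (l * nm) / real n\<rfloor>"
    using floor_diff_of_int[of "real (l * nm) / real n" "int l"] by simp
  finally show ?thesis
    using floor_l_nm by simp
qed

end

theorem proposition3p8:
  fixes l m n d mm nm mp np k :: nat and \<chi> :: int
  assumes "0 < l" "l < n" "0 < m" "m < n" "coprime m n"
    and "1 \<le> d" "d \<le> n - 1" "(m * d) mod n = 1"
    and "1 \<le> nm" "1 \<le> np" "mm + mp = m" "nm + np = n"
    and "int mp * int nm - int mm * int np = 1"
    and "0 < k" "\<bar>\<chi>\<bar> < int k"
  shows
    "let S = Fword (int l) m n;
         Xh = take (n - d) S; Yh = drop (n - d) S;
         S0 = flip_at S 0; Sld = flip_at S (l * d);
         lp = \<lceil>real (l * np) / real n\<rceil>;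
         lm = \<lfloor>real (l * nm) / real n\<rfloor>;
         Gp = Fword (int (k * l) + lp + \<chi>) (k * m + mp) (k * n + np);
         Gm = Fword (int (k * l) + lm + \<chi>) (k * m + mm) (k * n + nm)
     in Gp = (if \<chi> < 0 then wpow S (nat (int k + \<chi>)) @ Xh @ wpow S0 (nat (- \<chi>))
              else wpow Sld (nat \<chi>) @ wpow S (nat (int k - \<chi>)) @ Xh)
      \<and> Gm = (if \<chi> \<le> 0 then S @ wpow S0 (nat (- \<chi>)) @ Yh @ wpow S (nat (int k + \<chi> - 1))
              else Sld @ Yh @ wpow S (nat (int k - \<chi>)) @ wpow Sld (nat (\<chi> - 1)))"
proof -
  interpret farey_roots l m n mm mp nm np
    using assms by unfold_locales auto
  have "d = nm"
    using assms(2,7,8) by (intro inverse_eq_nm) auto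
  then have "n - d = np"
    using assms(12) by simp
  then show ?thesis
    using Gp_nonneg[of \<chi> k] Gp_neg[of \<chi> k] Gm_nonpos[of \<chi> k] Gm_pos[of \<chi> k] assms(15)
    unfolding Let_def \<open>d = nm\<close> floor_l_nm ceiling_l_np
    by (auto simp: abs_less_iff)
qed

end
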